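(* Let $X$ be an $n$-dimensional projective space over a field, let $K$ be a $k$-dimensional subspace of $X$ with $-1\le k\le n-3$, let $\mathcal B_{-1}$ be a $(2,1)$-blocking set in $X/K$, and let $H$ be an arbitrary hyperplane of $X$ containing $K$. Then the disjoint union $$\mathcal B=\{T\in\mathrm{Gr}_1(X):\langle K,T\rangle\in\mathcal B_{-1}\}\ \cup\ \{T\in\mathrm{Gr}_1(H): K\cap T\neq\emptyset\}$$ is a $(2,1)$-blocking set in $X$.
   Context: Projective dimension is used (the empty subspace has dimension $-1$); $\mathrm{Gr}_d(Y)$ is the set of $d$-dimensional subspaces of $Y$. For a $k$-dimensional subspace $K$ of $X$, the quotient space $X/K$ is the projective space of dimension $\dim X-k-1$ whose $r$-dimensional subspaces are the $(r+k+1)$-dimensional subspaces of $X$ containing $K$; the span $\langle K,T\rangle$ is regarded as a subspace of $X/K$. A $(2,1)$-blocking set in a projective space $Y$ is a set of lines of $Y$ such that every plane of $Y$ contains at least one of them (in $X/K$: a set of $(k+2)$-subspaces of $X$ containing $K$ such that every $(k+3)$-subspace of $X$ containing $K$ contains one of them). *)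

theory Defs
  imports "HOL-Analysis.Analysis"
begin

text \<open>The projective space X of dimension n over a field 'a is modelled as the lattice
of linear subspaces of the vector space 'a^'n, with n = CARD('n) - 1.
A projective subspace of projective dimension d is a linear subspace of vector
dimension d + 1 (the empty projective subspace is the zero subspace, dimension -1).\<close>

definition pdim :: "('a::field ^ 'n) set \<Rightarrow> int" where
  "pdim U = int (vec.dim U) - 1"

definition Gr :: "int \<Rightarrow> ('a::field ^ 'n) set \<Rightarrow> ('a ^ 'n) set set" where
  "Gr d Y = {U. vec.subspace U \<and> U \<subseteq> Y \<and> pdim U = d}"

definition blocking21 :: "('a::field ^ 'n) set \<Rightarrow> ('a ^ 'n) set set \<Rightarrow> bool" where
  "blocking21 Y B \<longleftrightarrow> B \<subseteq> Gr 1 Y \<and> (\<forall>P \<in> Gr 2 Y. \<exists>L \<in> B. L \<subseteq> P)"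

text \<open>A (2,1)-blocking set in the quotient space X/K: a set of (k+2)-subspaces of X
containing K such that every (k+3)-subspace of X containing K contains one of them,
where k = pdim K.\<close>
definition blocking21_quot :: "('a::field ^ 'n) set \<Rightarrow> ('a ^ 'n) set set \<Rightarrow> bool" where
  "blocking21_quot K B \<longleftrightarrow>
     B \<subseteq> {L \<in> Gr (pdim K + 2) UNIV. K \<subseteq> L} \<and>
     (\<forall>P \<in> Gr (pdim K + 3) UNIV. K \<subseteq> P \<longrightarrow> (\<exists>L \<in> B. L \<subseteq> P))"

end

theory Submission
  imports Defs
begin

text \<open>Let P be a plane of X. If P meets K in a point, that point together with any other point
of the line P \<inter> H spans a line of H meeting K. Otherwise \<langle>K, P\<rangle> is a (k+3)-subspace containing K,
so it contains some L \<in> B_{-1}; by the dimension formula T = L \<inter> P is a line, it misses K, and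
therefore \<langle>K, T\<rangle> = L.\<close>

context finite_dimensional_vector_space
begin

lemma dim_span_Un_Int:
  assumes "subspace U" "subspace V"
  shows "dim (span (U \<union> V)) + dim (U \<inter> V) = dim U + dim V"
proof -
  have "span U = U" "span V = V"
    using assms by (simp_all add: span_eq_iff)
  then show ?thesis
    using dim_sums_Int[OF assms] by (simp only: span_Un)
qed

lemma dim_span_Un_of_Int_zero:
  assumes "subspace U" "subspace V" "U \<inter> V \<subseteq> {0}"
  shows "dim (span (U \<union> V)) = dim U + dim V"
proof -
  have "dim (U \<inter> V) = 0"
    using assms(3) by simp
  then show ?thesis
    using dim_span_Un_Int[OF assms(1,2)] by linarith
qed

lemma dim_Int_hyperplane:
  assumes "subspace P" "subspace H" "dim H + 1 = dimension"
  shows "dim P \<le> dim (P \<inter> H) + 1"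
  using dim_span_Un_Int[OF assms(1,2)] dim_subset_UNIV[of "span (P \<union> H)"] assms(3) by linarith

lemma exists_dim2_subspace_through:
  assumes "subspace W" "v \<in> W" "v \<noteq> 0" "2 \<le> dim W"
  obtains T where "subspace T" "dim T = 2" "v \<in> T" "T \<subseteq> W"
proof -
  have "\<not> W \<subseteq> span {v}"
    using dim_mono[of W "{v}"] assms(3,4) by auto
  then obtain w where w: "w \<in> W" "w \<notin> span {v}" by blast
  have "dim (span {w, v}) = 2"
    using w(2) assms(3) by (simp add: dim_insert)
  moreover have "span {w, v} \<subseteq> W"
    using w(1) assms(1,2) by (simp add: span_minimal)
  ultimately show thesis
    using that[of "span {w, v}"] by (simp add: span_base)
qed

lemma span_Un_eq_of_dim_le:
  assumes "subspace K" "subspace T" "subspace L" "K \<subseteq> L" "T \<subseteq> L"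
    and "K \<inter> T \<subseteq> {0}" "dim L \<le> dim K + dim T"
  shows "span (K \<union> T) = L"
proof (rule subspace_dim_equal)
  show "span (K \<union> T) \<subseteq> L"
    using assms(3-5) by (simp add: span_minimal)
  show "dim L \<le> dim (span (K \<union> T))"
    using dim_span_Un_of_Int_zero[OF assms(1,2,6)] assms(7) by linarith
qed (use assms(3) in simp_all)

end

lemma Gr_iff: "U \<in> Gr d Y \<longleftrightarrow> vec.subspace U \<and> U \<subseteq> Y \<and> int (vec.dim U) = d + 1"
  by (auto simp: Gr_def pdim_def)

lemma line_of_hyperplane_through_point_of_plane:
  fixes K H P :: "('a::field ^ 'n) set"
  assumes "H \<in> Gr (int CARD('n) - 2) UNIV" "K \<subseteq> H" "P \<in> Gr 2 UNIV"
    and "v \<in> K \<inter> P" "v \<noteq> 0"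
  obtains T where "T \<in> Gr 1 H" "T \<subseteq> P" "K \<inter> T \<noteq> {0}"
proof -
  have sP: "vec.subspace P" and sH: "vec.subspace H"
    using assms(1,3) by (simp_all add: Gr_iff)
  have "2 \<le> vec.dim (P \<inter> H)"
    using vec.dim_Int_hyperplane[OF sP sH] assms(1,3)
    by (simp add: Gr_iff vec.dimension_def card_cart_basis)
  then obtain T where "vec.subspace T" "vec.dim T = 2" "v \<in> T" "T \<subseteq> P \<inter> H"
    using vec.exists_dim2_subspace_through[OF vec.subspace_inter[OF sP sH], of v] assms(2,4,5)
    by blast
  then show thesis
    using that[of T] assms(4,5) by (auto simp: Gr_iff)
qed

lemma blocking21_quot_line_in_plane:
  fixes K P :: "('a::field ^ 'n) set"
  assumes "vec.subspace K" "blocking21_quot K B0" "P \<in> Gr 2 UNIV" "K \<inter> P \<subseteq> {0}"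
  obtains T where "T \<in> Gr 1 UNIV" "T \<subseteq> P" "vec.span (K \<union> T) \<in> B0"
proof -
  define S where "S = vec.span (K \<union> P)"
  have sP: "vec.subspace P" and dP: "vec.dim P = 3"
    using assms(3) by (simp_all add: Gr_iff)
  have dS: "vec.dim S = vec.dim K + 3"
    unfolding S_def using vec.dim_span_Un_of_Int_zero[OF assms(1) sP assms(4)] dP by linarith
  have KS: "K \<subseteq> S" and PS: "P \<subseteq> S"
    using vec.span_superset[of "K \<union> P"] by (auto simp: S_def)
  have "S \<in> Gr (pdim K + 3) UNIV"
    using dS by (simp add: S_def Gr_iff pdim_def)
  then obtain L where L: "L \<in> B0" "L \<subseteq> S"
    using assms(2) KS unfolding blocking21_quot_def by blast
  then have "L \<in> Gr (pdim K + 2) UNIV" and KL: "K \<subseteq> L"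
    using assms(2) unfolding blocking21_quot_def by blast+
  then have sL: "vec.subspace L" and dL: "vec.dim L = vec.dim K + 2"
    by (simp_all add: Gr_iff pdim_def)
  have spanLP: "vec.span (L \<union> P) = S"
  proof (rule antisym)
    show "vec.span (L \<union> P) \<subseteq> S"
      using L(2) PS by (simp add: S_def vec.span_minimal)
    show "S \<subseteq> vec.span (L \<union> P)"
      unfolding S_def using KL by (intro vec.span_mono) blast
  qed
  have dT: "vec.dim (L \<inter> P) = 2"
    using vec.dim_span_Un_Int[OF sL sP, unfolded spanLP] dS dL dP by linarith
  have sT: "vec.subspace (L \<inter> P)"
    using sL sP by (rule vec.subspace_inter)
  have "vec.span (K \<union> (L \<inter> P)) = L"
    using vec.span_Un_eq_of_dim_le[OF assms(1) sT sL KL] assms(4) dT dL by auto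
  then show thesis
    using that[of "L \<inter> P"] sT dT L(1) by (simp add: Gr_iff)
qed

theorem proposition3p13:
  fixes K H :: "('a::field ^ 'n) set"
    and B0 :: "('a ^ 'n) set set"
    and n k :: int
  assumes n_def: "n = int CARD('n) - 1"
    and K_sub: "K \<in> Gr k UNIV"
    and k_bounds: "-1 \<le> k" "k \<le> n - 3"
    and B0_blocking: "blocking21_quot K B0"
    and H_hyp: "H \<in> Gr (n - 1) UNIV"
    and K_in_H: "K \<subseteq> H"
  shows "blocking21 UNIV
           ({T \<in> Gr 1 UNIV. vec.span (K \<union> T) \<in> B0}
            \<union> {T \<in> Gr 1 H. K \<inter> T \<noteq> {0}})"
proof -
  have sK: "vec.subspace K" and H: "H \<in> Gr (int CARD('n) - 2) UNIV"
    using K_sub H_hyp n_def by (simp_all add: Gr_iff)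
  show ?thesis
    unfolding blocking21_def
  proof (intro conjI ballI)
    show "{T \<in> Gr 1 UNIV. vec.span (K \<union> T) \<in> B0} \<union> {T \<in> Gr 1 H. K \<inter> T \<noteq> {0}} \<subseteq> Gr 1 UNIV"
      by (auto simp: Gr_def)
  next
    fix P :: "('a ^ 'n) set"
    assume P: "P \<in> Gr 2 UNIV"
    show "\<exists>T \<in> {T \<in> Gr 1 UNIV. vec.span (K \<union> T) \<in> B0} \<union> {T \<in> Gr 1 H. K \<inter> T \<noteq> {0}}. T \<subseteq> P"
    proof (cases "K \<inter> P \<subseteq> {0}")
      case True
      then obtain T where "T \<in> Gr 1 UNIV" "T \<subseteq> P" "vec.span (K \<union> T) \<in> B0"
        by (rule blocking21_quot_line_in_plane[OF sK B0_blocking P])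
      then show ?thesis by blast
    next
      case False
      then obtain v where "v \<in> K \<inter> P" "v \<noteq> 0" by blast
      then obtain T where "T \<in> Gr 1 H" "T \<subseteq> P" "K \<inter> T \<noteq> {0}"
        by (rule line_of_hyperplane_through_point_of_plane[OF H K_in_H P])
      then show ?thesis by blast
    qed
  qed
qed

end
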